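(* Let $G=(V,E)$ be a finite simple undirected graph, let $0<p\le 1$, and let $T\subseteq V$ be a set maximizing $f_p(S)$ over all $S\subseteq V$. Then for every $v\in T$ we have $d_v(T)^p\ge f_p(T)/2$.
   Context: For $v\in V$, $N(v)=\{u\in V:(u,v)\in E\}$ (so $v\notin N(v)$). For $S\subseteq V$ and $v\in V$, $d_v(S)=|N(v)\cap S|$. For $p>0$ and nonempty $S\subseteq V$, $f_p(S)=\frac{1}{|S|}\sum_{v\in S}d_v(S)^p$ (with the convention $0^p=0$), and $f_p(\emptyset)=0$. *)

theory Defs
  imports Complex_Main
begin

definition simple_graph :: "'a set \<Rightarrow> ('a \<Rightarrow> 'a \<Rightarrow> bool) \<Rightarrow> bool" where
  "simple_graph V E \<longleftrightarrow> finite V \<and> (\<forall>u v. E u v \<longrightarrow> E v u)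
     \<and> (\<forall>v. \<not> E v v) \<and> (\<forall>u v. E u v \<longrightarrow> u \<in> V \<and> v \<in> V)"

definition nbhd :: "'a set \<Rightarrow> ('a \<Rightarrow> 'a \<Rightarrow> bool) \<Rightarrow> 'a \<Rightarrow> 'a set" where
  "nbhd V E v = {u \<in> V. E u v}"

definition deg_in :: "'a set \<Rightarrow> ('a \<Rightarrow> 'a \<Rightarrow> bool) \<Rightarrow> 'a \<Rightarrow> 'a set \<Rightarrow> nat" where
  "deg_in V E v S = card (nbhd V E v \<inter> S)"

text \<open>f_p(S) = (1/|S|) * sum of d_v(S)^p; powr gives 0 powr p = 0, and f_p({}) = 0.\<close>
definition fp :: "'a set \<Rightarrow> ('a \<Rightarrow> 'a \<Rightarrow> bool) \<Rightarrow> real \<Rightarrow> 'a set \<Rightarrow> real" where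
  "fp V E p S = (if S = {} then 0
     else (\<Sum>v\<in>S. real (deg_in V E v S) powr p) / real (card S))"

end

theory Submission
  imports Defs
begin

text \<open>Let R be the set of vertices u of T with d_u(T)^p < f_p(T)/2 and suppose it is nonempty.
  Deleting R costs a remaining vertex w at most d_w(T)^(p-1) per deleted neighbour, by concavity
  of x \<mapsto> x^p. Every deleted neighbour u of w has smaller degree, so this is at most
  d_u(T)^(p-1), and charging each edge to its endpoint in R bounds the total loss by
  \<Sum>_{u \<in> R} d_u(T)^p < |R| f_p(T)/2. Together with the deleted summands themselves less than
  |R| f_p(T) is lost, so f_p(T - R) > f_p(T), contradicting maximality; some vertex of T survives
  because not every term lies below the average.\<close>

lemma powr_diff_le_concave:
  fixes x y p :: real
  assumes "p \<le> 1" "0 \<le> y" "y \<le> x"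
  shows "x powr p - y powr p \<le> (x - y) * x powr (p - 1)"
proof (cases "x = 0")
  case True
  then show ?thesis using assms by simp
next
  case False
  then have x_pos: "0 < x" using assms by simp
  define t where "t = y / x"
  have t_bounds: "0 \<le> t" "t \<le> 1" using x_pos assms by (auto simp: t_def)
  have "t \<le> t powr p"
  proof (cases "t = 0")
    case False
    then show ?thesis using powr_mono'[of p 1 t] assms t_bounds by simp
  qed simp
  then have "x powr p * t \<le> x powr p * t powr p" by (simp add: mult_left_mono)
  also have "\<dots> = y powr p" using x_pos t_bounds by (simp add: t_def powr_mult [symmetric])
  finally have "y * x powr (p - 1) \<le> y powr p"
    using x_pos by (simp add: t_def powr_diff field_simps)
  moreover have "(x - y) * x powr (p - 1) = x powr p - y * x powr (p - 1)"
    using x_pos by (simp add: left_diff_distrib powr_diff diff_divide_distrib)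
  ultimately show ?thesis by linarith
qed

lemma mult_powr_le_powr:
  fixes k d p :: real
  assumes "0 \<le> k" "k \<le> d"
  shows "k * d powr (p - 1) \<le> d powr p"
proof (cases "d = 0")
  case False
  then have "k * d powr (p - 1) \<le> d * d powr (p - 1)"
    using assms by (intro mult_right_mono) auto
  also have "\<dots> = d powr p" using False assms by (simp add: powr_diff)
  finally show ?thesis .
qed (use assms in simp)

lemma deg_in_Diff:
  assumes "finite T" "R \<subseteq> T"
  shows "deg_in V E w T = deg_in V E w (T - R) + deg_in V E w R"
proof -
  have "finite R" using assms finite_subset by blast
  moreover have "nbhd V E w \<inter> T = (nbhd V E w \<inter> (T - R)) \<union> (nbhd V E w \<inter> R)"
    using assms(2) by auto
  ultimately show ?thesis
    unfolding deg_in_def using assms(1) by (subst card_Un_disjoint [symmetric]) auto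
qed

lemma nbhd_Int_eq:
  assumes "simple_graph V E"
  shows "nbhd V E w \<inter> B = {u \<in> B. E w u}"
  using assms unfolding simple_graph_def nbhd_def by blast

lemma sum_nbhd_swap:
  assumes "simple_graph V E" "finite A" "finite B"
  shows "(\<Sum>w\<in>A. \<Sum>u\<in>nbhd V E w \<inter> B. f u w) = (\<Sum>u\<in>B. \<Sum>w\<in>nbhd V E u \<inter> A. f u w)"
proof -
  have "E w u \<longleftrightarrow> E u w" for u w
    using assms(1) unfolding simple_graph_def by blast
  then show ?thesis
    unfolding nbhd_Int_eq [OF assms(1)]
    using sum.swap_restrict [OF assms(2,3), of "\<lambda>w u. f u w" "\<lambda>w u. E w u"] by simp
qed

lemma sum_powr_deg_Diff_le:
  assumes G: "simple_graph V E" and p: "p \<le> 1" and RT: "R \<subseteq> T" and fin: "finite T"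
    and deg_le: "\<And>u w. u \<in> R \<Longrightarrow> w \<in> T - R \<Longrightarrow> E u w \<Longrightarrow> deg_in V E u T \<le> deg_in V E w T"
  shows "(\<Sum>w\<in>T - R. real (deg_in V E w T) powr p - real (deg_in V E w (T - R)) powr p)
           \<le> (\<Sum>u\<in>R. real (deg_in V E u T) powr p)"
proof -
  let ?d = "\<lambda>S v. real (deg_in V E v S)"
  have finR: "finite R" using fin RT finite_subset by blast
  have "?d T w powr p - ?d (T - R) w powr p \<le> (\<Sum>u\<in>nbhd V E w \<inter> R. ?d T u powr (p - 1))"
    if w: "w \<in> T - R" for w
  proof -
    have "?d T w powr p - ?d (T - R) w powr p \<le> ?d R w * ?d T w powr (p - 1)"
      using powr_diff_le_concave [OF p, of "?d (T - R) w" "?d T w"]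
      by (simp add: deg_in_Diff [OF fin RT])
    also have "\<dots> = (\<Sum>u\<in>nbhd V E w \<inter> R. ?d T w powr (p - 1))"
      by (simp add: deg_in_def)
    also have "\<dots> \<le> (\<Sum>u\<in>nbhd V E w \<inter> R. ?d T u powr (p - 1))"
    proof (rule sum_mono)
      fix u assume u: "u \<in> nbhd V E w \<inter> R"
      then have "E u w" by (simp add: nbhd_def)
      then have "w \<in> nbhd V E u \<inter> T"
        using G w unfolding simple_graph_def nbhd_def by blast
      then have "0 < deg_in V E u T"
        unfolding deg_in_def using fin card_gt_0_iff by blast
      moreover have "deg_in V E u T \<le> deg_in V E w T" using deg_le u w \<open>E u w\<close> by blast
      ultimately show "?d T w powr (p - 1) \<le> ?d T u powr (p - 1)"
        using p by (intro powr_mono2') auto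
    qed
    finally show ?thesis .
  qed
  then have "(\<Sum>w\<in>T - R. ?d T w powr p - ?d (T - R) w powr p)
      \<le> (\<Sum>w\<in>T - R. \<Sum>u\<in>nbhd V E w \<inter> R. ?d T u powr (p - 1))"
    by (rule sum_mono)
  also have "\<dots> = (\<Sum>u\<in>R. ?d (T - R) u * ?d T u powr (p - 1))"
    using sum_nbhd_swap [OF G _ finR, of "T - R" "\<lambda>u w. ?d T u powr (p - 1)"] fin
    by (simp add: deg_in_def)
  also have "\<dots> \<le> (\<Sum>u\<in>R. ?d T u powr p)"
  proof (rule sum_mono)
    fix u
    have "deg_in V E u (T - R) \<le> deg_in V E u T"
      using deg_in_Diff [OF fin RT] by simp
    then show "?d (T - R) u * ?d T u powr (p - 1) \<le> ?d T u powr p"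
      by (intro mult_powr_le_powr) auto
  qed
  finally show ?thesis .
qed

lemma ex_powr_deg_ge_fp:
  assumes "finite T" "T \<noteq> {}"
  shows "\<exists>u\<in>T. fp V E p T \<le> real (deg_in V E u T) powr p"
proof (rule ccontr)
  assume "\<not> ?thesis"
  then have "(\<Sum>u\<in>T. real (deg_in V E u T) powr p) < (\<Sum>u\<in>T. fp V E p T)"
    using assms by (intro sum_strict_mono) auto
  then show False
    using assms by (simp add: fp_def)
qed

lemma fp_nonneg: "0 \<le> fp V E p S"
  unfolding fp_def by (simp add: sum_nonneg)

lemma fp_Diff_low_gt:
  assumes G: "simple_graph V E" and p: "0 < p" "p \<le> 1" and TV: "T \<subseteq> V"
    and R_def: "R = {u \<in> T. real (deg_in V E u T) powr p < fp V E p T / 2}"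
    and R_ne: "R \<noteq> {}" and rest_ne: "T - R \<noteq> {}"
  shows "fp V E p T < fp V E p (T - R)"
proof -
  let ?g = "\<lambda>S v. real (deg_in V E v S) powr p"
  let ?F = "fp V E p T"
  have fin: "finite T" using G TV finite_subset unfolding simple_graph_def by blast
  have RT: "R \<subseteq> T" using R_def by blast
  have finR: "finite R" using fin RT finite_subset by blast
  have deg_le: "deg_in V E u T \<le> deg_in V E w T" if "u \<in> R" "w \<in> T - R" for u w
  proof -
    have "?g T u < ?g T w" using that R_def by auto
    moreover have "?g T w \<le> ?g T u" if "deg_in V E w T \<le> deg_in V E u T"
      using that p(1) by (intro powr_mono2) auto
    ultimately show ?thesis by linarith
  qed
  have loss: "(\<Sum>w\<in>T - R. ?g T w) - (\<Sum>w\<in>T - R. ?g (T - R) w) \<le> (\<Sum>u\<in>R. ?g T u)"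
    using sum_powr_deg_Diff_le [OF G p(2) RT fin deg_le] by (simp add: sum_subtractf)
  have low: "(\<Sum>u\<in>R. ?g T u) < real (card R) * (?F / 2)"
    using sum_strict_mono [of R "?g T" "\<lambda>_. ?F / 2"] finR R_ne R_def by auto
  have total: "(\<Sum>u\<in>R. ?g T u) + (\<Sum>w\<in>T - R. ?g T w) = real (card T) * ?F"
    using sum.subset_diff [OF RT fin, of "?g T"] fin rest_ne by (auto simp: fp_def)
  have card_rest: "real (card (T - R)) = real (card T) - real (card R)"
    using card_Diff_subset [OF finR RT] card_mono [OF fin RT] by (simp add: of_nat_diff)
  have "real (card (T - R)) * ?F < (\<Sum>w\<in>T - R. ?g (T - R) w)"
    using loss low total fp_nonneg [of V E p T] unfolding card_rest by (simp add: algebra_simps)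
  moreover have "0 < card (T - R)" using fin rest_ne by (simp add: card_gt_0_iff)
  ultimately show ?thesis
    using rest_ne by (simp add: fp_def pos_less_divide_eq mult.commute)
qed

theorem lemma4:
  fixes V :: "'a set" and E :: "'a \<Rightarrow> 'a \<Rightarrow> bool" and p :: real and T :: "'a set"
  assumes "simple_graph V E"
    and "0 < p" and "p \<le> 1"
    and "T \<subseteq> V"
    and "\<forall>S. S \<subseteq> V \<longrightarrow> fp V E p S \<le> fp V E p T"
  shows "\<forall>v\<in>T. real (deg_in V E v T) powr p \<ge> fp V E p T / 2"
proof (rule ccontr)
  define R where "R = {u \<in> T. real (deg_in V E u T) powr p < fp V E p T / 2}"
  assume "\<not> ?thesis"
  then have "R \<noteq> {}" unfolding R_def by force
  have "finite T" using assms(1,4) finite_subset unfolding simple_graph_def by blast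
  then obtain u where "u \<in> T" "fp V E p T \<le> real (deg_in V E u T) powr p"
    using ex_powr_deg_ge_fp \<open>R \<noteq> {}\<close> unfolding R_def by blast
  then have "u \<in> T - R" using fp_nonneg [of V E p T] unfolding R_def by auto
  then have "fp V E p T < fp V E p (T - R)"
    using fp_Diff_low_gt [OF assms(1-4) R_def \<open>R \<noteq> {}\<close>] by blast
  moreover have "fp V E p (T - R) \<le> fp V E p T" using assms(4,5) by blast
  ultimately show False by simp
qed

end
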